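(* Let $\mathcal X$ be a finite set with $N=|\mathcal X|\ge 2$, let $c\in(0,1/N]$ and $\varepsilon\ge 0$. If a Markov kernel $K$ from $\mathcal X$ to a finite set $\mathcal Y$ satisfies $K\in\mathcal M(\varepsilon,c)$, then $$\eta_{\mathrm{TV}}(K)\le \min\left\{\frac{e^\varepsilon-1}{e^\varepsilon(1-Nc)+1},\,1\right\}.$$
   Context: A Markov kernel (mechanism) $K$ from $\mathcal X$ to $\mathcal Y$ is a row-stochastic $|\mathcal X|\times|\mathcal Y|$ matrix with entries $K_{Y|X=x}(y)$; for a distribution $P_X$ on $\mathcal X$, $(K\circ P_X)(y)=\sum_x K_{Y|X=x}(y)P_X(x)$. For $P_X$ with full support and $y$ with $(K\circ P_X)(y)>0$, the pointwise maximal leakage (PML) is $\ell_{K\times P_X}(X\to y)=\log\frac{\max_{x\in\mathcal X}K_{Y|X=x}(y)}{(K\circ P_X)(y)}$ (natural log). For $c\in(0,1/N]$, $\mathcal Q_{\mathcal X}(c)=\{P_X\in\mathcal P(\mathcal X):\min_x P_X(x)\ge c\}$. For a set $\mathcal P$ of distributions, $C(K,\mathcal P)=\sup_{P_X\in\mathcal P}\sup_{y:(K\circ P_X)(y)>0}\ell_{K\times P_X}(X\to y)$. $\mathcal M(\varepsilon,c)$ is the set of all kernels $K$ from $\mathcal X$ to some finite output set with $C(K,\mathcal Q_{\mathcal X}(c))\le\varepsilon$ (said to satisfy $(\varepsilon,c)$-PML). The Dobrushin coefficient is $\eta_{\mathrm{TV}}(K)=\sup_{P_X\neq Q_X}\frac{\mathrm{TV}(K\circ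 P_X\|K\circ Q_X)}{\mathrm{TV}(P_X\|Q_X)}=\max_{x\neq x'}\mathrm{TV}(K_{Y|X=x}\|K_{Y|X=x'})$, with $\mathrm{TV}(P\|Q)=\frac12\sum|P-Q|$. *)

theory Defs
  imports Complex_Main "HOL-Library.Extended_Real"
begin

text \<open>Markov kernels between finite types: K x y = K_{Y|X=x}(y).\<close>

definition is_distribution :: "('a::finite \<Rightarrow> real) \<Rightarrow> bool" where
  "is_distribution P \<longleftrightarrow> (\<forall>a. P a \<ge> 0) \<and> (\<Sum>a\<in>UNIV. P a) = 1"

definition is_kernel :: "('x::finite \<Rightarrow> 'y::finite \<Rightarrow> real) \<Rightarrow> bool" where
  "is_kernel K \<longleftrightarrow> (\<forall>x. is_distribution (K x))"

definition push :: "('x::finite \<Rightarrow> 'y \<Rightarrow> real) \<Rightarrow> ('x \<Rightarrow> real) \<Rightarrow> 'y \<Rightarrow> real" where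
  "push K P y = (\<Sum>x\<in>UNIV. K x y * P x)"

definition pml :: "('x::finite \<Rightarrow> 'y \<Rightarrow> real) \<Rightarrow> ('x \<Rightarrow> real) \<Rightarrow> 'y \<Rightarrow> real" where
  "pml K P y = ln ((MAX x\<in>UNIV. K x y) / push K P y)"

definition Qset :: "real \<Rightarrow> ('x::finite \<Rightarrow> real) set" where
  "Qset c = {P. is_distribution P \<and> (\<forall>x. P x \<ge> c)}"

definition Cap :: "('x::finite \<Rightarrow> 'y::finite \<Rightarrow> real) \<Rightarrow> ('x \<Rightarrow> real) set \<Rightarrow> ereal" where
  "Cap K Ps = (SUP Py \<in> {(P, y). P \<in> Ps \<and> push K P y > 0}. ereal (pml K (fst Py) (snd Py)))"

definition satisfies_PML :: "real \<Rightarrow> real \<Rightarrow> ('x::finite \<Rightarrow> 'y::finite \<Rightarrow> real) \<Rightarrow> bool" where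
  "satisfies_PML \<epsilon> c K \<longleftrightarrow> is_kernel K \<and> Cap K (Qset c) \<le> ereal \<epsilon>"

definition TV :: "('y::finite \<Rightarrow> real) \<Rightarrow> ('y \<Rightarrow> real) \<Rightarrow> real" where
  "TV P Q = (1/2) * (\<Sum>y\<in>UNIV. \<bar>P y - Q y\<bar>)"

text \<open>Dobrushin coefficient, in its max-over-pairs-of-rows form (given as equal in the paper).\<close>
definition dobrushin :: "('x::finite \<Rightarrow> 'y::finite \<Rightarrow> real) \<Rightarrow> real" where
  "dobrushin K = Max {TV (K x) (K x') | x x'. x \<noteq> x'}"

end

theory Submission
  imports Defs
begin

text \<open>For every pair of inputs x, x' the prior that puts the minimal mass c everywhere and the
  remaining mass 1 - N c on x' lies in Q(c). The PML constraint at this prior bounds each entry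
  K x y by e^\<epsilon> (c \<Sum>_z K z y + (1 - N c) K x' y). Applying this in both directions bounds
  max (K x y, K x' y) in terms of min (K x y, K x' y); summing over y, where the sums of max and
  min are 1 + TV and 1 - TV, yields a linear inequality for TV (K x) (K x').\<close>

lemma distribution_nonneg: "is_distribution P \<Longrightarrow> 0 \<le> P a"
  unfolding is_distribution_def by simp

lemma distribution_sum: "is_distribution P \<Longrightarrow> (\<Sum>a\<in>UNIV. P a) = 1"
  unfolding is_distribution_def by simp

lemma TV_le_1:
  assumes "is_distribution P" "is_distribution Q"
  shows "TV P Q \<le> 1"
proof -
  have "(\<Sum>y\<in>UNIV. \<bar>P y - Q y\<bar>) \<le> (\<Sum>y\<in>UNIV. P y + Q y)"
    using distribution_nonneg[OF assms(1)] distribution_nonneg[OF assms(2)]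
    by (intro sum_mono) (simp add: abs_le_iff add_increasing add_increasing2)
  also have "\<dots> = 2"
    by (simp add: sum.distrib distribution_sum[OF assms(1)] distribution_sum[OF assms(2)])
  finally show ?thesis
    unfolding TV_def by simp
qed

lemma sum_max_distributions:
  assumes "is_distribution P" "is_distribution Q"
  shows "(\<Sum>y\<in>UNIV. max (P y) (Q y)) = 1 + TV P Q"
proof -
  have max_eq: "\<And>y. max (P y) (Q y) = (P y + Q y + \<bar>P y - Q y\<bar>) / 2"
    by auto
  show ?thesis
    unfolding max_eq by (simp add: TV_def sum.distrib sum_divide_distrib[symmetric]
        distribution_sum[OF assms(1)] distribution_sum[OF assms(2)])
qed

lemma sum_min_distributions:
  assumes "is_distribution P" "is_distribution Q"
  shows "(\<Sum>y\<in>UNIV. min (P y) (Q y)) = 1 - TV P Q"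
proof -
  have min_eq: "\<And>y. min (P y) (Q y) = (P y + Q y - \<bar>P y - Q y\<bar>) / 2"
    by auto
  show ?thesis
    unfolding min_eq by (simp add: TV_def sum.distrib sum_subtractf sum_divide_distrib[symmetric]
        distribution_sum[OF assms(1)] distribution_sum[OF assms(2)])
qed

lemma TV_le_of_max_le_min:
  fixes P Q T :: "'y::finite \<Rightarrow> real"
  assumes P: "is_distribution P" and Q: "is_distribution Q"
    and max_le: "\<And>y. max (P y) (Q y) \<le> e * (T y + a * min (P y) (Q y))"
    and sum_T: "(\<Sum>y\<in>UNIV. T y) = 1 - a"
    and pos: "e * a + 1 > 0"
  shows "TV P Q \<le> (e - 1) / (e * a + 1)"
proof -
  have "1 + TV P Q = (\<Sum>y\<in>UNIV. max (P y) (Q y))"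
    using sum_max_distributions[OF P Q] by simp
  also have "\<dots> \<le> (\<Sum>y\<in>UNIV. e * (T y + a * min (P y) (Q y)))"
    by (intro sum_mono max_le)
  also have "\<dots> = e * ((1 - a) + a * (1 - TV P Q))"
    by (simp add: sum_distrib_left[symmetric] sum.distrib sum_T sum_min_distributions[OF P Q])
  finally have "TV P Q * (e * a + 1) \<le> e - 1"
    by (simp add: algebra_simps)
  with pos show ?thesis
    by (simp add: le_divide_eq)
qed

lemma le_exp_pml_mult_push:
  fixes K :: "'x::finite \<Rightarrow> 'y \<Rightarrow> real"
  assumes "push K P y > 0"
  shows "K x y \<le> exp (pml K P y) * push K P y"
proof -
  define m where "m = (MAX z\<in>UNIV. K z y)"
  have "K x y \<le> m"
    unfolding m_def by (rule Max_ge) auto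
  moreover have "m \<le> exp (pml K P y) * push K P y"
  proof (cases "m > 0")
    case True
    then have "exp (pml K P y) = m / push K P y"
      using assms by (simp add: pml_def m_def)
    then show ?thesis
      using assms by simp
  next
    case False
    then show ?thesis
      using assms by (simp add: order_trans[of m 0])
  qed
  ultimately show ?thesis
    by linarith
qed

lemma push_nonneg:
  "is_kernel K \<Longrightarrow> is_distribution P \<Longrightarrow> 0 \<le> push K P y"
  unfolding push_def is_kernel_def by (simp add: sum_nonneg distribution_nonneg)

text \<open>A prior of full support is needed for outputs y of probability zero under it:
  these are excluded from Cap, but then every entry K x y vanishes.\<close>

lemma kernel_le_exp_mult_push:
  fixes K :: "'x::finite \<Rightarrow> 'y::finite \<Rightarrow> real"
  assumes K: "is_kernel K" and cap: "Cap K Ps \<le> ereal \<epsilon>"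
    and "P \<in> Ps" and P: "is_distribution P" and P_pos: "\<And>z. P z > 0"
  shows "K x y \<le> exp \<epsilon> * push K P y"
proof (cases "push K P y > 0")
  case True
  have "ereal (pml K P y) \<le> Cap K Ps"
    unfolding Cap_def using \<open>P \<in> Ps\<close> True by (intro SUP_upper2[of "(P, y)"]) auto
  also note cap
  finally have "pml K P y \<le> \<epsilon>"
    by simp
  then have "exp (pml K P y) * push K P y \<le> exp \<epsilon> * push K P y"
    using True by (intro mult_right_mono) simp_all
  with le_exp_pml_mult_push[OF True] show ?thesis
    by (rule order_trans)
next
  case False
  with push_nonneg[OF K P, of y] have "(\<Sum>z\<in>UNIV. K z y * P z) = 0"
    unfolding push_def by simp
  moreover have "\<And>z. 0 \<le> K z y * P z"
    using K P unfolding is_kernel_def by (simp add: distribution_nonneg)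
  ultimately have "K x y * P x = 0"
    by (simp add: sum_nonneg_eq_0_iff)
  with P_pos[of x] have "K x y = 0"
    by simp
  with push_nonneg[OF K P] show ?thesis
    by simp
qed

definition Qset_vertex :: "real \<Rightarrow> 'x::finite \<Rightarrow> 'x \<Rightarrow> real" where
  "Qset_vertex c x' z = c + (if z = x' then 1 - real (card (UNIV :: 'x set)) * c else 0)"

lemma card_UNIV_mult_le_1:
  assumes "c \<le> 1 / real (card (UNIV :: 'x::finite set))"
  shows "real (card (UNIV :: 'x set)) * c \<le> 1"
proof -
  have "0 < card (UNIV :: 'x set)"
    by (simp add: finite_UNIV_card_ge_0)
  with assms show ?thesis
    by (simp add: le_divide_eq mult.commute)
qed

lemma Qset_vertex_in_Qset:
  assumes "0 \<le> c" "c \<le> 1 / real (card (UNIV :: 'x::finite set))"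
  shows "Qset_vertex c (x' :: 'x) \<in> Qset c"
  using assms card_UNIV_mult_le_1[OF assms(2)] unfolding Qset_def is_distribution_def Qset_vertex_def
  by (simp add: sum.distrib)

lemma push_Qset_vertex:
  fixes K :: "'x::finite \<Rightarrow> 'y \<Rightarrow> real"
  shows "push K (Qset_vertex c x') y = c * (\<Sum>z\<in>UNIV. K z y) + (1 - real (card (UNIV :: 'x set)) * c) * K x' y"
proof -
  have "push K (Qset_vertex c x') y
      = (\<Sum>z\<in>UNIV. c * K z y + (if z = x' then (1 - real (card (UNIV :: 'x set)) * c) * K x' y else 0))"
    unfolding push_def Qset_vertex_def by (intro sum.cong) (auto simp: algebra_simps)
  then show ?thesis
    by (simp add: sum.distrib sum_distrib_left)
qed

lemma satisfies_PML_entry_le: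
  fixes K :: "'x::finite \<Rightarrow> 'y::finite \<Rightarrow> real"
  assumes "0 < c" "c \<le> 1 / real (card (UNIV :: 'x set))" and PML: "satisfies_PML \<epsilon> c K"
  shows "K x y \<le> exp \<epsilon> * (c * (\<Sum>z\<in>UNIV. K z y) + (1 - real (card (UNIV :: 'x set)) * c) * K x' y)"
proof -
  have vertex: "Qset_vertex c x' \<in> Qset c"
    using assms by (intro Qset_vertex_in_Qset) simp_all
  have "K x y \<le> exp \<epsilon> * push K (Qset_vertex c x') y"
  proof (rule kernel_le_exp_mult_push)
    show "is_kernel K" "Cap K (Qset c) \<le> ereal \<epsilon>"
      using PML unfolding satisfies_PML_def by simp_all
    show "Qset_vertex c x' \<in> Qset c"
      by (rule vertex)
    then show "is_distribution (Qset_vertex c x')"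
      unfolding Qset_def by simp
    have "c \<le> Qset_vertex c x' z" for z
      using vertex unfolding Qset_def by simp
    with \<open>0 < c\<close> show "0 < Qset_vertex c x' z" for z
      by (simp add: order.strict_trans2)
  qed
  then show ?thesis
    by (simp only: push_Qset_vertex)
qed

lemma satisfies_PML_TV_rows_le:
  fixes K :: "'x::finite \<Rightarrow> 'y::finite \<Rightarrow> real"
  assumes c: "0 < c" "c \<le> 1 / real (card (UNIV :: 'x set))" and PML: "satisfies_PML \<epsilon> c K"
  shows "TV (K x) (K x') \<le> (exp \<epsilon> - 1) / (exp \<epsilon> * (1 - real (card (UNIV :: 'x set)) * c) + 1)"
proof -
  define a where "a = 1 - real (card (UNIV :: 'x set)) * c"
  define T where "T y = c * (\<Sum>z\<in>UNIV. K z y)" for y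
  have K: "is_kernel K"
    using PML unfolding satisfies_PML_def by simp
  have "0 \<le> a"
    using card_UNIV_mult_le_1[OF c(2)] unfolding a_def by simp
  have "(\<Sum>y\<in>UNIV. T y) = c * (\<Sum>z\<in>UNIV. \<Sum>y\<in>UNIV. K z y)"
    unfolding T_def by (simp add: sum_distrib_left sum.swap[of "\<lambda>z y. c * K z y"])
  also have "\<dots> = 1 - a"
    using K unfolding a_def is_kernel_def by (simp add: distribution_sum)
  finally have sum_T: "(\<Sum>y\<in>UNIV. T y) = 1 - a" .
  have "max (K x y) (K x' y) \<le> exp \<epsilon> * (T y + a * min (K x y) (K x' y))" for y
    using satisfies_PML_entry_le[OF c PML, of x y x'] satisfies_PML_entry_le[OF c PML, of x' y x]
    unfolding T_def a_def by (simp add: min_def)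
  moreover have "exp \<epsilon> * a + 1 > 0"
    using \<open>0 \<le> a\<close> by (simp add: add_nonneg_pos)
  ultimately show ?thesis
    using K sum_T unfolding is_kernel_def a_def by (blast intro: TV_le_of_max_le_min)
qed

lemma dobrushin_le:
  fixes K :: "'x::finite \<Rightarrow> 'y::finite \<Rightarrow> real" and x\<^sub>0 x\<^sub>1 :: 'x
  assumes "x\<^sub>0 \<noteq> x\<^sub>1" and "\<And>x x'. x \<noteq> x' \<Longrightarrow> TV (K x) (K x') \<le> b"
  shows "dobrushin K \<le> b"
proof -
  let ?D = "{TV (K x) (K x') | x x'. x \<noteq> x'}"
  show ?thesis
    unfolding dobrushin_def
  proof (rule Max.boundedI)
    have "?D \<subseteq> (\<lambda>(x, x'). TV (K x) (K x')) ` UNIV"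
      by auto
    then show "finite ?D"
      by (rule finite_subset) simp
    show "?D \<noteq> {}"
      using assms(1) by blast
    show "t \<le> b" if "t \<in> ?D" for t
      using that assms(2) by blast
  qed
qed

theorem theorem1:
  fixes K :: "'x::finite \<Rightarrow> 'y::finite \<Rightarrow> real" and c \<epsilon> :: real
  assumes "card (UNIV :: 'x set) \<ge> 2"
    and "0 < c" and "c \<le> 1 / real (card (UNIV :: 'x set))"
    and "\<epsilon> \<ge> 0"
    and "satisfies_PML \<epsilon> c K"
  shows "dobrushin K \<le> min ((exp \<epsilon> - 1) / (exp \<epsilon> * (1 - real (card (UNIV :: 'x set)) * c) + 1)) 1"
proof -
  obtain x\<^sub>0 x\<^sub>1 :: 'x where "x\<^sub>0 \<noteq> x\<^sub>1"
    using assms(1) card_le_Suc0_iff_eq[of "UNIV :: 'x set"] by auto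
  moreover have "TV (K x) (K x') \<le> 1" for x x'
    using assms(5) unfolding satisfies_PML_def is_kernel_def by (simp add: TV_le_1)
  ultimately show ?thesis
    using satisfies_PML_TV_rows_le[OF assms(2,3,5)] by (intro dobrushin_le) auto
qed

end
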